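(* Let $V$ be an $n$-dimensional vector space over a field $\mathbb{F}$ with an alternating bilinear form $\mathsf{s}$ of maximal rank. Then the symplectic group $\mathrm{Sp}(V)$ acts flag-transitively on $\Gamma(V)$.
   Context: $\mathrm{Sp}(V)$ is the group of linear automorphisms of $V$ preserving $\mathsf{s}$. $\mathrm{Rad}(U)=U\cap U^\perp$; maximal rank means $\dim\mathrm{Rad}(V)\le1$. $\Gamma(V)$: for $i\in I=\{1,\dots,n-1\}$ the objects of type $i$ are the $i$-dimensional subspaces $U$ with $U\cap\mathrm{Rad}(V)=0$ and $\dim\mathrm{Rad}(U)\le1$; $X,Y$ are incident iff $X=Y$, or $X\subseteq Y$ with $X\cap\mathrm{Rad}(Y)=0$, or vice versa. A flag is a set of pairwise incident objects, its type is the set of types of its members. Flag-transitive: for every $J\subseteq I$ the group is transitive on the set of flags of type $J$. *)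

theory Defs
  imports Complex_Main
begin

definition perp :: "('v \<Rightarrow> 'v \<Rightarrow> 'a::field) \<Rightarrow> 'v set \<Rightarrow> 'v set" where
  "perp s U = {v. \<forall>u\<in>U. s u v = 0}"

definition Rad :: "('v \<Rightarrow> 'v \<Rightarrow> 'a::field) \<Rightarrow> 'v set \<Rightarrow> 'v set" where
  "Rad s U = U \<inter> perp s U"

definition bilinear_form :: "('a::field \<Rightarrow> 'v::ab_group_add \<Rightarrow> 'v) \<Rightarrow> ('v \<Rightarrow> 'v \<Rightarrow> 'a) \<Rightarrow> bool" where
  "bilinear_form scale s \<longleftrightarrow>
     (\<forall>x. Vector_Spaces.linear scale (*) (s x)) \<and>
     (\<forall>y. Vector_Spaces.linear scale (*) (\<lambda>x. s x y))"

definition alternating :: "('v \<Rightarrow> 'v \<Rightarrow> 'a::field) \<Rightarrow> bool" where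
  "alternating s \<longleftrightarrow> (\<forall>x. s x x = 0)"

definition maximal_rank :: "('a::field \<Rightarrow> 'v::ab_group_add \<Rightarrow> 'v) \<Rightarrow> ('v \<Rightarrow> 'v \<Rightarrow> 'a) \<Rightarrow> bool" where
  "maximal_rank scale s \<longleftrightarrow> vector_space.dim scale (Rad s UNIV) \<le> 1"

definition Sp :: "('a::field \<Rightarrow> 'v::ab_group_add \<Rightarrow> 'v) \<Rightarrow> ('v \<Rightarrow> 'v \<Rightarrow> 'a) \<Rightarrow> ('v \<Rightarrow> 'v) set" where
  "Sp scale s = {g. Vector_Spaces.linear scale scale g \<and> bij g \<and> (\<forall>x y. s (g x) (g y) = s x y)}"

definition is_object :: "('a::field \<Rightarrow> 'v::ab_group_add \<Rightarrow> 'v) \<Rightarrow> ('v \<Rightarrow> 'v \<Rightarrow> 'a) \<Rightarrow> nat \<Rightarrow> 'v set \<Rightarrow> bool" where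
  "is_object scale s i U \<longleftrightarrow>
     i \<in> {1..vector_space.dim scale (UNIV::'v set) - 1} \<and>
     module.subspace scale U \<and> vector_space.dim scale U = i \<and>
     U \<inter> Rad s UNIV = {0} \<and> vector_space.dim scale (Rad s U) \<le> 1"

definition objects :: "('a::field \<Rightarrow> 'v::ab_group_add \<Rightarrow> 'v) \<Rightarrow> ('v \<Rightarrow> 'v \<Rightarrow> 'a) \<Rightarrow> 'v set set" where
  "objects scale s = {U. \<exists>i. is_object scale s i U}"

definition obj_type :: "('a::field \<Rightarrow> 'v::ab_group_add \<Rightarrow> 'v) \<Rightarrow> 'v set \<Rightarrow> nat" where
  "obj_type scale U = vector_space.dim scale U"

definition incident :: "('v::zero \<Rightarrow> 'v \<Rightarrow> 'a::field) \<Rightarrow> 'v set \<Rightarrow> 'v set \<Rightarrow> bool" where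
  "incident s X Y \<longleftrightarrow> X = Y \<or> (X \<subseteq> Y \<and> X \<inter> Rad s Y = {0}) \<or> (Y \<subseteq> X \<and> Y \<inter> Rad s X = {0})"

definition is_flag :: "('a::field \<Rightarrow> 'v::ab_group_add \<Rightarrow> 'v) \<Rightarrow> ('v \<Rightarrow> 'v \<Rightarrow> 'a) \<Rightarrow> 'v set set \<Rightarrow> bool" where
  "is_flag scale s F \<longleftrightarrow> F \<subseteq> objects scale s \<and> (\<forall>X\<in>F. \<forall>Y\<in>F. incident s X Y)"

definition flag_type :: "('a::field \<Rightarrow> 'v::ab_group_add \<Rightarrow> 'v) \<Rightarrow> 'v set set \<Rightarrow> nat set" where
  "flag_type scale F = obj_type scale ` F"

definition flag_transitive :: "('a::field \<Rightarrow> 'v::ab_group_add \<Rightarrow> 'v) \<Rightarrow> ('v \<Rightarrow> 'v \<Rightarrow> 'a) \<Rightarrow> ('v \<Rightarrow> 'v) set \<Rightarrow> bool" where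
  "flag_transitive scale s G \<longleftrightarrow>
     (\<forall>J \<subseteq> {1..vector_space.dim scale (UNIV::'v set) - 1}.
        \<forall>F1 F2. is_flag scale s F1 \<and> flag_type scale F1 = J \<and>
               is_flag scale s F2 \<and> flag_type scale F2 = J \<longrightarrow>
               (\<exists>g\<in>G. (\<lambda>U. g ` U) ` F1 = F2))"

end

theory Submission
  imports Defs
begin

text \<open>Adjoin V itself to both flags. A flag then becomes a chain of subspaces, each meeting the
  radical of the next one trivially, and two flags of the same type have members of the same
  dimensions. An isometry between the two chains is built member by member, from the bottom
  up, using Witt's extension theorem in the form: an isometric embedding g of U \<subseteq> W into W'
  extends to an isometry of W onto W' if dim W = dim W', dim Rad W = dim Rad W', and U and g U
  meet the radicals of W and W' trivially. The radicals of the chain members have dimension at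
  most 1, and dim W - dim Rad W is even, so dim Rad W is determined by dim W and the hypotheses
  hold at each step. The last step, for V itself, yields an element of Sp(V).

  Witt's theorem is proved by induction on dim W: choose hyperbolic pairs (e, f) in W and
  (e', f') in W' that are adapted to g, apply the induction hypothesis to the orthogonal
  complements of the pairs, and extend the result by e \<mapsto> e', f \<mapsto> f'. If U is not totally
  isotropic, the pairs are taken from U and g U. Otherwise a nonzero u \<in> U is completed to a
  pair (u, f) in W, and f' is chosen with s (g x) f' = s x f on U.\<close>

locale alternating_form = finite_dimensional_vector_space scale Bas
  for scale :: "'a::field \<Rightarrow> 'v::ab_group_add \<Rightarrow> 'v" and Bas :: "'v set" +
  fixes s :: "'v \<Rightarrow> 'v \<Rightarrow> 'a"
  assumes bilinear: "bilinear_form scale s" and alternating: "alternating s"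
begin

sublocale pair: finite_dimensional_vector_space_pair scale Bas scale Bas ..

abbreviation lin :: "('v \<Rightarrow> 'v) \<Rightarrow> bool" where
  "lin \<equiv> Vector_Spaces.linear scale scale"

definition isometric_on :: "('v \<Rightarrow> 'v) \<Rightarrow> 'v set \<Rightarrow> bool" where
  "isometric_on g X \<longleftrightarrow> (\<forall>x\<in>X. \<forall>y\<in>X. s (g x) (g y) = s x y)"

definition isometry_between :: "('v \<Rightarrow> 'v) \<Rightarrow> 'v set \<Rightarrow> 'v set \<Rightarrow> bool" where
  "isometry_between h W W' \<longleftrightarrow> lin h \<and> h ` W = W' \<and> inj_on h W \<and> isometric_on h W"

lemma s_add_right [simp]: "s x (y + z) = s x y + s x z"
  and s_scale_right [simp]: "s x (scale c y) = c * s x y"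
  and s_add_left [simp]: "s (x + y) z = s x z + s y z"
  and s_scale_left [simp]: "s (scale c x) z = c * s x z"
  using bilinear unfolding bilinear_form_def Vector_Spaces.linear_iff by blast+

lemma s_zero_right [simp]: "s x 0 = 0"
  using s_scale_right[of x 0 0] by simp

lemma s_zero_left [simp]: "s 0 x = 0"
  using s_scale_left[of 0 0 x] by simp

lemma s_minus_right [simp]: "s x (- y) = - s x y"
  by (metis add.right_inverse add_eq_0_iff s_add_right s_zero_right)

lemma s_minus_left [simp]: "s (- x) y = - s x y"
  by (metis add.right_inverse add_eq_0_iff s_add_left s_zero_left)

lemma s_diff_right [simp]: "s x (y - z) = s x y - s x z"
  by (metis diff_conv_add_uminus s_add_right s_minus_right)

lemma s_diff_left [simp]: "s (x - y) z = s x z - s y z"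
  by (metis diff_conv_add_uminus s_add_left s_minus_left)

lemma s_sum_right: "s x (sum f A) = (\<Sum>i\<in>A. s x (f i))"
  by (induction A rule: infinite_finite_induct) auto

lemma s_sum_left: "s (sum f A) y = (\<Sum>i\<in>A. s (f i) y)"
  by (induction A rule: infinite_finite_induct) auto

lemma s_self [simp]: "s x x = 0"
  using alternating unfolding alternating_def by blast

lemma s_swap: "s y x = - s x y"
proof -
  have "0 = s (x + y) (x + y)" by simp
  also have "\<dots> = s x y + s y x" by (simp del: s_self) simp
  finally show ?thesis by (simp add: eq_neg_iff_add_eq_0 add.commute)
qed

subsection \<open>Orthogonality and radicals\<close>

lemma perp_pair_iff: "v \<in> perp s {e, f} \<longleftrightarrow> s e v = 0 \<and> s f v = 0"
  unfolding perp_def by auto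

lemma subspace_perp: "subspace (perp s A)"
  unfolding subspace_def perp_def by auto

lemma subspace_Rad: "subspace W \<Longrightarrow> subspace (Rad s W)"
  unfolding Rad_def by (simp add: subspace_inter subspace_perp)

lemma Rad_subset: "Rad s W \<subseteq> W"
  unfolding Rad_def by auto

lemma Rad_eq_self_iff: "Rad s W = W \<longleftrightarrow> (\<forall>x\<in>W. \<forall>y\<in>W. s x y = 0)"
  unfolding Rad_def perp_def by blast

lemma Rad_eq_self_transfer:
  assumes "subspace W'" "dim W = dim W'" "dim (Rad s W) = dim (Rad s W')" "Rad s W = W"
  shows "Rad s W' = W'"
proof -
  have "dim (Rad s W') = dim W'"
    using assms(2-4) by metis
  then show ?thesis
    using subspace_dim_equal[OF subspace_Rad[OF assms(1)] assms(1) Rad_subset] by simp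
qed

lemma pairing_nonzero_if_notin_Rad:
  assumes "x \<in> W" "x \<notin> Rad s W"
  shows "\<exists>y\<in>W. s x y \<noteq> 0"
proof -
  obtain y where "y \<in> W" "s y x \<noteq> 0"
    using assms unfolding Rad_def perp_def by auto
  then show ?thesis using s_swap[of y x] by auto
qed

lemma hyperbolic_pair_exists:
  assumes "subspace W" "x \<in> W" "y \<in> W" "s x y \<noteq> 0"
  shows "\<exists>e\<in>W. \<exists>f\<in>W. s e f = 1"
  using assms subspace_scale[of W x "1 / s x y"] by force

subsection \<open>Prescribed pairings\<close>

lemma exists_orthogonal_separating:
  assumes W: "subspace W" and T: "finite T" "T \<subseteq> W" and a: "a \<in> W"
    and prescribe: "\<And>c. \<exists>w\<in>W. \<forall>b\<in>T. s b w = c b"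
    and notin_Rad: "\<And>t. t \<in> span T \<Longrightarrow> a - t \<notin> Rad s W"
  shows "\<exists>z\<in>W. (\<forall>b\<in>T. s b z = 0) \<and> s a z \<noteq> 0"
proof -
  have "\<exists>d\<in>W. \<forall>b'\<in>T. s b' d = (if b' = b then 1 else 0)" for b
    using prescribe[of "\<lambda>b'. if b' = b then 1 else 0"] .
  then obtain d where d: "\<And>b. d b \<in> W"
    and d_dual: "\<And>b b'. b' \<in> T \<Longrightarrow> s b' (d b) = (if b' = b then 1 else 0)"
    by metis
  define v where "v = a - (\<Sum>b\<in>T. scale (s a (d b)) b)"
  have "v \<in> W"
    unfolding v_def using W T a by (auto intro!: subspace_diff subspace_sum subspace_scale)
  moreover have "v \<notin> Rad s W"
    unfolding v_def by (rule notin_Rad, rule span_sum, rule span_scale, rule span_base)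
  ultimately obtain y where y: "y \<in> W" "s v y \<noteq> 0"
    using pairing_nonzero_if_notin_Rad by blast
  define z where "z = y - (\<Sum>b\<in>T. scale (s b y) (d b))"
  have "z \<in> W"
    unfolding z_def using W y d by (auto intro!: subspace_diff subspace_sum subspace_scale)
  moreover have "s b' z = 0" if "b' \<in> T" for b'
  proof -
    have "(\<Sum>b\<in>T. s b' (scale (s b y) (d b))) = (\<Sum>b\<in>T. if b' = b then s b y else 0)"
      using that by (intro sum.cong) (auto simp: d_dual)
    then show ?thesis
      unfolding z_def using that T(1) by (simp add: s_sum_right)
  qed
  moreover have "s a z = s v y"
    unfolding z_def v_def by (simp add: s_sum_right s_sum_left ac_simps)
  ultimately show ?thesis using y by metis
qed

lemma exists_prescribed_pairings:
  assumes "subspace W" "T \<subseteq> W" "independent T" "span T \<inter> Rad s W = {0}"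
  shows "\<exists>w\<in>W. \<forall>b\<in>T. s b w = c b"
proof -
  have "finite T" using assms(3) by (rule finiteI_independent)
  then show ?thesis
    using assms
  proof (induction T arbitrary: c rule: finite_induct)
    case empty
    then show ?case by (auto intro: subspace_0)
  next
    case (insert a T)
    have a: "a \<in> W" "a \<notin> span T" and T: "T \<subseteq> W" "independent T"
      using insert.prems insert.hyps(2) by (auto simp: independent_insert dependent_mono)
    have span_T: "span T \<subseteq> span (insert a T)"
      by (rule span_mono) blast
    then have "span T \<inter> Rad s W = {0}"
      using insert.prems(4) span_zero subspace_0[OF subspace_Rad[OF insert.prems(1)]] by blast
    then have prescribe: "\<And>c. \<exists>w\<in>W. \<forall>b\<in>T. s b w = c b"
      using insert.IH insert.prems(1) T by blast
    have "a - t \<notin> Rad s W" if "t \<in> span T" for t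
    proof
      assume "a - t \<in> Rad s W"
      moreover have "a - t \<in> span (insert a T)"
        using span_diff[OF span_base[OF insertI1] subsetD[OF span_T that]] .
      moreover have "a - t \<noteq> 0" using a(2) that by auto
      ultimately show False using insert.prems(4) by blast
    qed
    then obtain z where z: "z \<in> W" "\<forall>b\<in>T. s b z = 0" "s a z \<noteq> 0"
      using exists_orthogonal_separating[OF insert.prems(1) insert.hyps(1) T(1) a(1) prescribe]
      by blast
    obtain w0 where w0: "w0 \<in> W" "\<forall>b\<in>T. s b w0 = c b"
      using prescribe by blast
    define w where "w = w0 + scale ((c a - s a w0) / s a z) z"
    have "w \<in> W" unfolding w_def using insert.prems(1) w0(1) z(1)
      by (intro subspace_add subspace_scale)
    moreover have "\<forall>b\<in>insert a T. s b w = c b"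
      unfolding w_def using w0(2) z(2,3) by simp
    ultimately show ?case by blast
  qed
qed

lemma exists_transported_pairing:
  assumes g: "lin g" "inj_on g U" and U: "subspace U"
    and W': "subspace W'" "g ` U \<subseteq> W'" "g ` U \<inter> Rad s W' = {0}"
  shows "\<exists>f'\<in>W'. \<forall>x\<in>U. s (g x) f' = s x f"
proof -
  interpret g: Vector_Spaces.linear scale scale g by fact
  obtain T where T: "T \<subseteq> U" "independent T" "span T = U"
    using basis_exists U span_subspace by metis
  have inj: "inj_on g T" using g(2) T(1) inj_on_subset by blast
  have gT: "g ` T \<subseteq> W'" "span (g ` T) \<inter> Rad s W' = {0}"
    using W'(2,3) T(1,3) g.span_image[of T] by auto
  have "independent (g ` T)"
    using g.independent_injective_image[OF T(2)] g(2) T(3) by simp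
  then obtain f' where f': "f' \<in> W'" "\<forall>b\<in>g ` T. s b f' = s (inv_into T g b) f"
    using exists_prescribed_pairings[OF W'(1) gT(1) _ gT(2), where c = "\<lambda>b. s (inv_into T g b) f"]
    by blast
  have on_basis: "\<forall>b\<in>T. s (g b) f' = s b f"
    using f'(2) inj by simp
  have "s (g x) f' = s x f" if "x \<in> span T" for x
    using that by (induction rule: span_induct_alt) (simp_all add: g.add g.scale on_basis)
  then show ?thesis using f'(1) T(3) by blast
qed

subsection \<open>Hyperbolic pairs\<close>

text \<open>For \<open>s e f = 1\<close>, this is the projection onto \<open>span {e, f}\<close> along \<open>perp s {e, f}\<close>.\<close>

definition hyp_proj :: "'v \<Rightarrow> 'v \<Rightarrow> 'v \<Rightarrow> 'v" where
  "hyp_proj e f x = scale (s x f) e - scale (s x e) f"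

lemma hyp_proj_add: "hyp_proj e f (x + y) = hyp_proj e f x + hyp_proj e f y"
  unfolding hyp_proj_def by (simp add: algebra_simps)

lemma hyp_proj_scale: "hyp_proj e f (scale c x) = scale c (hyp_proj e f x)"
  unfolding hyp_proj_def by (simp add: algebra_simps)

lemma hyp_proj_in: "subspace W \<Longrightarrow> e \<in> W \<Longrightarrow> f \<in> W \<Longrightarrow> hyp_proj e f x \<in> W"
  unfolding hyp_proj_def by (intro subspace_diff subspace_scale)

context
  fixes e f :: 'v
  assumes ef: "s e f = 1"
begin

lemma s_hyp_pair_swap: "s f e = -1"
  using s_swap[of f e] ef by simp

lemma minus_hyp_proj_perp: "x - hyp_proj e f x \<in> perp s {e, f}"
  unfolding hyp_proj_def perp_pair_iff
  using ef s_hyp_pair_swap s_swap[of x e] s_swap[of x f] by simp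

lemma s_hyp_decomposition:
  "s x y = s x e * s y f - s x f * s y e + s (x - hyp_proj e f x) (y - hyp_proj e f y)"
proof -
  define x1 y1 where "x1 = x - hyp_proj e f x" and "y1 = y - hyp_proj e f y"
  have "s e x1 = 0" "s f x1 = 0" "s e y1 = 0" "s f y1 = 0"
    using minus_hyp_proj_perp unfolding x1_def y1_def perp_pair_iff by auto
  then have x1: "s x1 e = 0" "s x1 f = 0" and y1: "s e y1 = 0" "s f y1 = 0"
    using s_swap[of e x1] s_swap[of f x1] by auto
  have "s x y = s (hyp_proj e f x + x1) (hyp_proj e f y + y1)"
    unfolding x1_def y1_def by simp
  also have "\<dots> = s (hyp_proj e f x) (hyp_proj e f y) + s x1 y1"
    using x1 y1 unfolding hyp_proj_def by simp
  also have "s (hyp_proj e f x) (hyp_proj e f y) = s x e * s y f - s x f * s y e"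
    unfolding hyp_proj_def using ef s_hyp_pair_swap by (simp add: algebra_simps)
  finally show ?thesis unfolding x1_def y1_def .
qed

context
  fixes W :: "'v set"
  assumes W: "subspace W" and e: "e \<in> W" and f: "f \<in> W"
begin

lemma minus_hyp_proj_in_complement: "x \<in> W \<Longrightarrow> x - hyp_proj e f x \<in> W \<inter> perp s {e, f}"
  using minus_hyp_proj_perp subspace_diff[OF W _ hyp_proj_in[OF W e f]] by blast

lemma dim_hyp_complement: "dim W = dim (W \<inter> perp s {e, f}) + 2"
proof -
  define W1 where "W1 = W \<inter> perp s {e, f}"
  have W1: "subspace W1" unfolding W1_def using W subspace_perp by (rule subspace_inter)
  have "W \<subseteq> span (insert e (insert f W1))"
  proof
    fix x assume "x \<in> W"
    then have "x - hyp_proj e f x \<in> span (insert e (insert f W1))"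
      using minus_hyp_proj_in_complement unfolding W1_def by (blast intro: span_base)
    then show "x \<in> span (insert e (insert f W1))"
      unfolding hyp_proj_def
      by (metis (no_types, lifting) diff_add_cancel insertI1 insert_commute span_add span_base
          span_diff span_scale)
  qed
  moreover have "span (insert e (insert f W1)) \<subseteq> W"
    using W e f unfolding W1_def by (intro span_minimal) auto
  ultimately have "dim W = dim (insert e (insert f W1))"
    by (metis dim_span subset_antisym span_eq_iff W)
  moreover have span_W1: "span W1 = W1"
    using W1 by (simp add: span_eq_iff)
  moreover have "f \<notin> W1"
    using ef unfolding W1_def by (simp add: perp_pair_iff)
  moreover have "e \<notin> span (insert f W1)"
  proof
    assume "e \<in> span (insert f W1)"
    then obtain k where "e - scale k f \<in> W1"
      unfolding span_insert span_W1 by blast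
    then show False
      using s_hyp_pair_swap unfolding W1_def by (simp add: perp_pair_iff)
  qed
  ultimately show ?thesis
    unfolding W1_def by (simp add: dim_insert span_W1)
qed

lemma Rad_hyp_complement: "Rad s (W \<inter> perp s {e, f}) = Rad s W"
proof
  show "Rad s W \<subseteq> Rad s (W \<inter> perp s {e, f})"
    unfolding Rad_def perp_def using e f by auto
  show "Rad s (W \<inter> perp s {e, f}) \<subseteq> Rad s W"
  proof
    fix r assume r: "r \<in> Rad s (W \<inter> perp s {e, f})"
    then have "r \<in> W" "r \<in> perp s {e, f}" unfolding Rad_def by auto
    moreover have "s y r = 0" if "y \<in> W" for y
    proof -
      have "s (y - hyp_proj e f y) r = 0"
        using r minus_hyp_proj_in_complement[OF that] unfolding Rad_def perp_def by blast
      moreover have "s (hyp_proj e f y) r = 0"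
        using \<open>r \<in> perp s {e, f}\<close> unfolding hyp_proj_def perp_pair_iff by simp
      ultimately show ?thesis by simp
    qed
    ultimately show "r \<in> Rad s W" unfolding Rad_def perp_def by blast
  qed
qed

end

end

lemma even_dim_minus_dim_Rad: "subspace W \<Longrightarrow> even (dim W - dim (Rad s W))"
proof (induction "dim W" arbitrary: W rule: less_induct)
  case less
  show ?case
  proof (cases "\<forall>x\<in>W. \<forall>y\<in>W. s x y = 0")
    case True
    then have "Rad s W = W" by (simp add: Rad_eq_self_iff)
    then show ?thesis by simp
  next
    case False
    then obtain e f where ef: "e \<in> W" "f \<in> W" "s e f = 1"
      using hyperbolic_pair_exists[OF less.prems] by blast
    note dim_W = dim_hyp_complement[OF ef(3) less.prems ef(1,2)]
    note Rad_W = Rad_hyp_complement[OF ef(3) less.prems ef(1,2)]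
    have "even (dim (W \<inter> perp s {e, f}) - dim (Rad s W))"
      using less.hyps[of "W \<inter> perp s {e, f}"] dim_W Rad_W less.prems subspace_perp
      by (simp add: subspace_inter)
    moreover have "dim (Rad s W) \<le> dim (W \<inter> perp s {e, f})"
      using dim_subset[OF Rad_subset[of "W \<inter> perp s {e, f}"]] Rad_W by simp
    ultimately show ?thesis using dim_W by auto
  qed
qed

lemma dim_Rad_eq_if_dim_eq:
  assumes "subspace M" "subspace M'" "dim M = dim M'"
    and "dim (Rad s M) \<le> 1" "dim (Rad s M') \<le> 1"
  shows "dim (Rad s M) = dim (Rad s M')"
proof -
  have "even (dim M - dim (Rad s M))" "even (dim M' - dim (Rad s M'))"
    using even_dim_minus_dim_Rad assms(1,2) by blast+
  moreover have "dim (Rad s M) \<le> dim M" "dim (Rad s M') \<le> dim M'"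
    using dim_subset[OF Rad_subset] by auto
  moreover have "a = b" if "a \<le> 1" "b \<le> 1" "a \<le> d" "b \<le> d" "even (d - a)" "even (d - b)"
    for a b d :: nat
    using that by presburger
  ultimately show ?thesis
    using assms(3-5) by metis
qed

subsection \<open>Witt's extension theorem\<close>

definition witt_data :: "'v set \<Rightarrow> 'v set \<Rightarrow> 'v set \<Rightarrow> ('v \<Rightarrow> 'v) \<Rightarrow> bool" where
  "witt_data W W' U g \<longleftrightarrow>
     subspace W \<and> subspace W' \<and> subspace U \<and> U \<subseteq> W \<and> g ` U \<subseteq> W' \<and>
     dim W = dim W' \<and> dim (Rad s W) = dim (Rad s W') \<and>
     U \<inter> Rad s W = {0} \<and> g ` U \<inter> Rad s W' = {0} \<and>
     lin g \<and> inj_on g U \<and> isometric_on g U"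

lemma witt_dataD:
  assumes "witt_data W W' U g"
  shows "subspace W" "subspace W'" "subspace U" "U \<subseteq> W" "g ` U \<subseteq> W'"
    and "dim W = dim W'" "dim (Rad s W) = dim (Rad s W')"
    and "U \<inter> Rad s W = {0}" "g ` U \<inter> Rad s W' = {0}"
    and "lin g" "inj_on g U" "isometric_on g U"
  using assms unfolding witt_data_def by simp_all

text \<open>Pairs along which \<open>g\<close> can be extended by \<open>e \<mapsto> e'\<close>, \<open>f \<mapsto> f'\<close>: the splitting
  \<open>x = hyp_proj e f x + (x - hyp_proj e f x)\<close> restricts to \<open>U\<close>, and \<open>g\<close> carries it to the
  splitting along \<open>(e', f')\<close>.\<close>

definition adapted_pairs :: "'v set \<Rightarrow> ('v \<Rightarrow> 'v) \<Rightarrow> 'v \<Rightarrow> 'v \<Rightarrow> 'v \<Rightarrow> 'v \<Rightarrow> bool" where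
  "adapted_pairs U g e f e' f' \<longleftrightarrow> s e f = 1 \<and> s e' f' = 1 \<and>
     (\<forall>x\<in>U. x - hyp_proj e f x \<in> U \<and> g (x - hyp_proj e f x) = g x - hyp_proj e' f' (g x) \<and>
            s (g x) e' = s x e \<and> s (g x) f' = s x f)"

lemma adapted_pairs_zero:
  "lin g \<Longrightarrow> s e f = 1 \<Longrightarrow> s e' f' = 1 \<Longrightarrow> adapted_pairs {0} g e f e' f'"
  unfolding adapted_pairs_def hyp_proj_def by (simp add: pair.linear_0)

lemma adapted_pairs_image:
  assumes U: "subspace U" "a \<in> U" "b \<in> U" and ab: "s a b = 1"
    and g: "lin g" "isometric_on g U"
  shows "adapted_pairs U g a b (g a) (g b)"
proof -
  have s_g: "s (g x) (g y) = s x y" if "x \<in> U" "y \<in> U" for x y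
    using g(2) that unfolding isometric_on_def by blast
  show ?thesis
    unfolding adapted_pairs_def
    using U ab s_g g(1) hyp_proj_in[OF U]
    by (auto simp: hyp_proj_def pair.linear_diff pair.linear_scale intro: subspace_diff)
qed

lemma adapted_pairs_isotropic:
  assumes U: "subspace U" "\<forall>x\<in>U. \<forall>y\<in>U. s x y = 0" "u \<in> U" and uf: "s u f = 1"
    and g: "lin g" "isometric_on g U" and f': "\<forall>x\<in>U. s (g x) f' = s x f"
  shows "adapted_pairs U g u f (g u) f'"
proof -
  have "hyp_proj u f x = scale (s x f) u" "s (g x) (g u) = 0" if "x \<in> U" for x
    using U g(2) that unfolding hyp_proj_def isometric_on_def by auto
  then show ?thesis
    unfolding adapted_pairs_def
    using U uf g(1) f' by (auto simp: hyp_proj_def pair.linear_diff pair.linear_scale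
        intro: subspace_diff subspace_scale)
qed

lemma adapted_pairs_exist:
  assumes data: "witt_data W W' U g" and not_isotropic: "\<not> (\<forall>x\<in>W. \<forall>y\<in>W. s x y = 0)"
  shows "\<exists>e\<in>W. \<exists>f\<in>W. \<exists>e'\<in>W'. \<exists>f'\<in>W'. adapted_pairs U g e f e' f'"
proof -
  note W = witt_dataD(1,2)[OF data] and U = witt_dataD(3-5)[OF data]
    and dims = witt_dataD(6,7)[OF data] and Rad = witt_dataD(8,9)[OF data]
    and g = witt_dataD(10-12)[OF data]
  obtain e f where ef: "e \<in> W" "f \<in> W" "s e f = 1"
    using hyperbolic_pair_exists[OF W(1)] not_isotropic by blast
  have "Rad s W' \<noteq> W'"
    using Rad_eq_self_transfer[OF W(1) dims[symmetric]] not_isotropic Rad_eq_self_iff by blast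
  then have "\<not> (\<forall>x\<in>W'. \<forall>y\<in>W'. s x y = 0)"
    using Rad_eq_self_iff by blast
  then obtain e' f' where ef': "e' \<in> W'" "f' \<in> W'" "s e' f' = 1"
    using hyperbolic_pair_exists[OF W(2)] by blast
  consider "U = {0}" | "\<exists>x\<in>U. \<exists>y\<in>U. s x y \<noteq> 0" | u where "u \<in> U" "u \<noteq> 0" "\<forall>x\<in>U. \<forall>y\<in>U. s x y = 0"
    using subspace_0[OF U(1)] by blast
  then show ?thesis
  proof cases
    case 1
    then show ?thesis using adapted_pairs_zero[OF g(1) ef(3) ef'(3)] ef ef' by blast
  next
    case 2
    then obtain a b where "a \<in> U" "b \<in> U" "s a b = 1"
      using hyperbolic_pair_exists[OF U(1)] by blast
    then show ?thesis using adapted_pairs_image[OF U(1) _ _ _ g(1,3)] U by blast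
  next
    case 3
    then have "u \<in> W" "u \<notin> Rad s W" using U(2) Rad(1) by auto
    then obtain y where y: "y \<in> W" "s u y \<noteq> 0"
      using pairing_nonzero_if_notin_Rad by blast
    define f0 where "f0 = scale (1 / s u y) y"
    have f0: "f0 \<in> W" "s u f0 = 1"
      unfolding f0_def using y subspace_scale[OF W(1)] by auto
    obtain f1 where "f1 \<in> W'" "\<forall>x\<in>U. s (g x) f1 = s x f0"
      using exists_transported_pairing[OF g(1,2) U(1) W(2) U(3) Rad(2)] by blast
    then show ?thesis
      using adapted_pairs_isotropic[OF U(1) 3(3,1) f0(2) g(1,3)] 3(1) f0(1) U by blast
  qed
qed

lemma witt_data_hyp_complement:
  assumes data: "witt_data W W' U g"
    and pairs: "e \<in> W" "f \<in> W" "e' \<in> W'" "f' \<in> W'" "adapted_pairs U g e f e' f'"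
  shows "witt_data (W \<inter> perp s {e, f}) (W' \<inter> perp s {e', f'}) (U \<inter> perp s {e, f}) g"
proof -
  note W = witt_dataD(1,2)[OF data] and U = witt_dataD(3-5)[OF data]
    and dims = witt_dataD(6,7)[OF data] and Rad = witt_dataD(8,9)[OF data]
    and g = witt_dataD(10-12)[OF data]
  have ef: "s e f = 1" "s e' f' = 1" and s_g: "\<forall>x\<in>U. s (g x) e' = s x e \<and> s (g x) f' = s x f"
    using pairs(5) unfolding adapted_pairs_def by blast+
  note dim_W = dim_hyp_complement[OF ef(1) W(1) pairs(1,2)] dim_hyp_complement[OF ef(2) W(2) pairs(3,4)]
  note Rad_W = Rad_hyp_complement[OF ef(1) W(1) pairs(1,2)] Rad_hyp_complement[OF ef(2) W(2) pairs(3,4)]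
  have g_perp: "g x \<in> perp s {e', f'}" if "x \<in> U \<inter> perp s {e, f}" for x
  proof -
    have "x \<in> U" "s e x = 0" "s f x = 0"
      using that by (auto simp: perp_pair_iff)
    then show ?thesis
      using s_g s_swap[of e' "g x"] s_swap[of f' "g x"] s_swap[of e x] s_swap[of f x]
      by (simp add: perp_pair_iff)
  qed
  have zero: "0 \<in> U \<inter> perp s {e, f}"
    using subspace_0[OF U(1)] subspace_0[OF subspace_perp] by blast
  show ?thesis
    unfolding witt_data_def Rad_W
  proof (intro conjI)
    show "subspace (W \<inter> perp s {e, f})" "subspace (W' \<inter> perp s {e', f'})"
      "subspace (U \<inter> perp s {e, f})"
      using W U(1) by (simp_all add: subspace_inter subspace_perp)
    show "U \<inter> perp s {e, f} \<subseteq> W \<inter> perp s {e, f}"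
      using U(2) by blast
    show "g ` (U \<inter> perp s {e, f}) \<subseteq> W' \<inter> perp s {e', f'}"
      using U(3) g_perp by blast
    show "dim (W \<inter> perp s {e, f}) = dim (W' \<inter> perp s {e', f'})"
      using dim_W dims(1) by linarith
    show "dim (Rad s W) = dim (Rad s W')" by (fact dims(2))
    show "U \<inter> perp s {e, f} \<inter> Rad s W = {0}"
      using Rad(1) zero by blast
    have "g ` (U \<inter> perp s {e, f}) \<inter> Rad s W' \<subseteq> g ` U \<inter> Rad s W'"
      by (intro Int_mono image_mono) auto
    moreover have "0 \<in> g ` (U \<inter> perp s {e, f}) \<inter> Rad s W'"
      using zero pair.linear_0[OF g(1)] subspace_0[OF subspace_Rad[OF W(2)]] by force
    ultimately show "g ` (U \<inter> perp s {e, f}) \<inter> Rad s W' = {0}"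
      unfolding Rad(2) by blast
    show "lin g" by (fact g(1))
    show "inj_on g (U \<inter> perp s {e, f})"
      using g(2) by (rule inj_on_subset) blast
    show "isometric_on g (U \<inter> perp s {e, f})"
      using g(3) unfolding isometric_on_def by blast
  qed
qed

text \<open>The map sending \<open>e, f\<close> to \<open>e', f'\<close> and acting as \<open>h1\<close> on \<open>perp s {e, f}\<close>.\<close>

definition hyp_extension :: "'v \<Rightarrow> 'v \<Rightarrow> 'v \<Rightarrow> 'v \<Rightarrow> ('v \<Rightarrow> 'v) \<Rightarrow> 'v \<Rightarrow> 'v" where
  "hyp_extension e f e' f' h1 x = scale (s x f) e' - scale (s x e) f' + h1 (x - hyp_proj e f x)"

context
  fixes W W' :: "'v set" and e f e' f' :: 'v and h1 :: "'v \<Rightarrow> 'v"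
  assumes W: "subspace W" "subspace W'"
    and pairs: "e \<in> W" "f \<in> W" "e' \<in> W'" "f' \<in> W'" "s e f = 1" "s e' f' = 1"
    and h1: "isometry_between h1 (W \<inter> perp s {e, f}) (W' \<inter> perp s {e', f'})"
begin

lemma s_hyp_extension:
  assumes "x \<in> W"
  shows "s (hyp_extension e f e' f' h1 x) e' = s x e" "s (hyp_extension e f e' f' h1 x) f' = s x f"
proof -
  have "h1 (x - hyp_proj e f x) \<in> perp s {e', f'}"
    using h1 minus_hyp_proj_in_complement[OF pairs(5) W(1) pairs(1,2) assms]
    unfolding isometry_between_def by blast
  then have "s (h1 (x - hyp_proj e f x)) e' = 0" "s (h1 (x - hyp_proj e f x)) f' = 0"
    using s_swap[of e'] s_swap[of f'] by (auto simp: perp_pair_iff)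
  then show "s (hyp_extension e f e' f' h1 x) e' = s x e" "s (hyp_extension e f e' f' h1 x) f' = s x f"
    unfolding hyp_extension_def using pairs(6) s_hyp_pair_swap[OF pairs(6)] by simp_all
qed

lemma minus_hyp_proj_hyp_extension:
  assumes "x \<in> W"
  shows "hyp_extension e f e' f' h1 x - hyp_proj e' f' (hyp_extension e f e' f' h1 x) =
    h1 (x - hyp_proj e f x)"
proof -
  have "hyp_proj e' f' (hyp_extension e f e' f' h1 x) = scale (s x f) e' - scale (s x e) f'"
    unfolding hyp_proj_def s_hyp_extension[OF assms] ..
  then show ?thesis
    unfolding hyp_extension_def by simp
qed

lemma lin_hyp_extension: "lin (hyp_extension e f e' f' h1)"
proof -
  have "lin h1" using h1 unfolding isometry_between_def by blast
  note h1_simps = pair.linear_add[OF this] pair.linear_diff[OF this] pair.linear_scale[OF this]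
  show ?thesis
    unfolding Vector_Spaces.linear_iff hyp_extension_def
    by (simp add: vector_space_axioms h1_simps hyp_proj_add hyp_proj_scale algebra_simps)
qed

lemma hyp_extension_image: "hyp_extension e f e' f' h1 ` W = W'"
proof
  show "hyp_extension e f e' f' h1 ` W \<subseteq> W'"
  proof
    fix y assume "y \<in> hyp_extension e f e' f' h1 ` W"
    then obtain x where x: "x \<in> W" "y = hyp_extension e f e' f' h1 x" by blast
    have "h1 (x - hyp_proj e f x) \<in> W'"
      using h1 minus_hyp_proj_in_complement[OF pairs(5) W(1) pairs(1,2) x(1)]
      unfolding isometry_between_def by blast
    then show "y \<in> W'"
      unfolding x hyp_extension_def using W(2) pairs(3,4)
      by (intro subspace_add subspace_diff subspace_scale)
  qed
  show "W' \<subseteq> hyp_extension e f e' f' h1 ` W"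
  proof
    fix y assume y: "y \<in> W'"
    obtain x1 where x1: "x1 \<in> W \<inter> perp s {e, f}" "h1 x1 = y - hyp_proj e' f' y"
      using h1 minus_hyp_proj_in_complement[OF pairs(6) W(2) pairs(3,4) y]
      unfolding isometry_between_def by (metis imageE)
    have "s x1 e = 0" "s x1 f = 0"
      using x1(1) s_swap[of e x1] s_swap[of f x1] by (auto simp: perp_pair_iff)
    define x where "x = scale (s y f') e - scale (s y e') f + x1"
    have "x \<in> W"
      unfolding x_def using W(1) pairs(1,2) x1(1) by (intro subspace_add subspace_diff subspace_scale) auto
    moreover have "s x f = s y f'" "s x e = s y e'"
      unfolding x_def using \<open>s x1 e = 0\<close> \<open>s x1 f = 0\<close> pairs(5) s_hyp_pair_swap[OF pairs(5)]
      by simp_all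
    then have "x - hyp_proj e f x = x1"
      unfolding hyp_proj_def by (simp add: x_def)
    then have "hyp_extension e f e' f' h1 x = hyp_proj e' f' y + h1 x1"
      unfolding hyp_extension_def hyp_proj_def \<open>s x f = s y f'\<close> \<open>s x e = s y e'\<close> by simp
    then have "hyp_extension e f e' f' h1 x = y"
      using x1(2) by simp
    ultimately show "y \<in> hyp_extension e f e' f' h1 ` W" by blast
  qed
qed

lemma inj_on_hyp_extension: "inj_on (hyp_extension e f e' f' h1) W"
proof -
  have "x = 0" if x: "x \<in> W" "hyp_extension e f e' f' h1 x = 0" for x
  proof -
    have "s x e = 0" "s x f = 0"
      using s_hyp_extension[OF x(1)] x(2) by simp_all
    then have "hyp_proj e f x = 0" "x \<in> W \<inter> perp s {e, f}"
      using minus_hyp_proj_in_complement[OF pairs(5) W(1) pairs(1,2) x(1)]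
      unfolding hyp_proj_def by simp_all
    moreover have "0 \<in> W \<inter> perp s {e, f}"
      using subspace_0[OF W(1)] subspace_0[OF subspace_perp] by blast
    ultimately show "x = 0"
      using x(2) h1 \<open>s x e = 0\<close> \<open>s x f = 0\<close>
      unfolding isometry_between_def hyp_extension_def inj_on_def
      by (metis add_0 diff_zero pair.linear_0 scale_zero_left)
  qed
  then show ?thesis
    using pair.linear_inj_on_iff_eq_0[OF lin_hyp_extension W(1)] by blast
qed

lemma isometric_on_hyp_extension: "isometric_on (hyp_extension e f e' f' h1) W"
  unfolding isometric_on_def
proof (intro ballI)
  fix x y assume x: "x \<in> W" and y: "y \<in> W"
  let ?h = "hyp_extension e f e' f' h1"
  have "isometric_on h1 (W \<inter> perp s {e, f})"
    using h1 unfolding isometry_between_def by blast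
  then have h1_iso: "s (h1 (x - hyp_proj e f x)) (h1 (y - hyp_proj e f y)) =
      s (x - hyp_proj e f x) (y - hyp_proj e f y)"
    using minus_hyp_proj_in_complement[OF pairs(5) W(1) pairs(1,2)] x y
    unfolding isometric_on_def by blast
  have "s (?h x) (?h y) = s (?h x) e' * s (?h y) f' - s (?h x) f' * s (?h y) e' +
      s (?h x - hyp_proj e' f' (?h x)) (?h y - hyp_proj e' f' (?h y))"
    by (rule s_hyp_decomposition[OF pairs(6)])
  also have "\<dots> = s x e * s y f - s x f * s y e + s (x - hyp_proj e f x) (y - hyp_proj e f y)"
    by (simp only: s_hyp_extension[OF x] s_hyp_extension[OF y] h1_iso
        minus_hyp_proj_hyp_extension[OF x] minus_hyp_proj_hyp_extension[OF y])
  also have "\<dots> = s x y"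
    by (rule s_hyp_decomposition[OF pairs(5), symmetric])
  finally show "s (?h x) (?h y) = s x y" .
qed

lemma isometry_between_hyp_extension: "isometry_between (hyp_extension e f e' f' h1) W W'"
  unfolding isometry_between_def
  using lin_hyp_extension hyp_extension_image inj_on_hyp_extension isometric_on_hyp_extension
  by blast

lemma hyp_extension_extends:
  assumes "adapted_pairs U g e f e' f'" "U \<subseteq> W" "\<forall>x\<in>U \<inter> perp s {e, f}. h1 x = g x" "x \<in> U"
  shows "hyp_extension e f e' f' h1 x = g x"
proof -
  have "x - hyp_proj e f x \<in> U \<inter> perp s {e, f}"
    using assms(1,4) minus_hyp_proj_perp[OF pairs(5)] unfolding adapted_pairs_def by blast
  then have "h1 (x - hyp_proj e f x) = g x - hyp_proj e' f' (g x)"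
    using assms unfolding adapted_pairs_def by simp
  then show ?thesis
    using assms(1,4) unfolding adapted_pairs_def hyp_extension_def hyp_proj_def by simp
qed

end

lemma witt_extension_isotropic:
  assumes data: "witt_data W W' U g" and isotropic: "\<forall>x\<in>W. \<forall>y\<in>W. s x y = 0"
  shows "\<exists>h. isometry_between h W W' \<and> (\<forall>x\<in>U. h x = g x)"
proof -
  note W = witt_dataD(1,2)[OF data] and dims = witt_dataD(6,7)[OF data]
  have "Rad s W = W" using isotropic by (simp add: Rad_eq_self_iff)
  then have "U = {0}"
    using witt_dataD(4,8)[OF data] by (simp add: Int_absorb2)
  have "Rad s W' = W'"
    using Rad_eq_self_transfer[OF W(2) dims \<open>Rad s W = W\<close>] .
  obtain h where h: "lin h" "h ` W = W'" "inj_on h W"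
    using pair.subspace_isomorphism[OF W dims(1)] by blast
  have "s (h x) (h y) = 0" if "x \<in> W" "y \<in> W" for x y
  proof -
    have "h x \<in> W'" "h y \<in> Rad s W'"
      using that h(2) \<open>Rad s W' = W'\<close> by auto
    then show ?thesis unfolding Rad_def perp_def by blast
  qed
  then have "isometric_on h W"
    using isotropic unfolding isometric_on_def by simp
  moreover have "\<forall>x\<in>U. h x = g x"
    using \<open>U = {0}\<close> h(1) witt_dataD(10)[OF data] by (simp add: pair.linear_0)
  ultimately show ?thesis
    using h unfolding isometry_between_def by blast
qed

theorem witt_extension:
  "witt_data W W' U g \<Longrightarrow> \<exists>h. isometry_between h W W' \<and> (\<forall>x\<in>U. h x = g x)"
proof (induction "dim W" arbitrary: W W' U g rule: less_induct)
  case less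
  note W = witt_dataD(1,2)[OF less.prems] and U = witt_dataD(4)[OF less.prems]
  show ?case
  proof (cases "\<forall>x\<in>W. \<forall>y\<in>W. s x y = 0")
    case True
    with less.prems show ?thesis by (rule witt_extension_isotropic)
  next
    case False
    then obtain e f e' f' where pairs: "e \<in> W" "f \<in> W" "e' \<in> W'" "f' \<in> W'"
      and adapted: "adapted_pairs U g e f e' f'"
      using adapted_pairs_exist[OF less.prems] by blast
    then have ef: "s e f = 1" "s e' f' = 1" unfolding adapted_pairs_def by blast+
    have "dim (W \<inter> perp s {e, f}) < dim W"
      using dim_hyp_complement[OF ef(1) W(1) pairs(1,2)] by simp
    from less.hyps[OF this witt_data_hyp_complement[OF less.prems pairs adapted]]
    obtain h1 where h1: "isometry_between h1 (W \<inter> perp s {e, f}) (W' \<inter> perp s {e', f'})"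
      and h1_g: "\<forall>x\<in>U \<inter> perp s {e, f}. h1 x = g x"
      by blast
    show ?thesis
      using isometry_between_hyp_extension[OF W pairs ef h1]
        hyp_extension_extends[OF W pairs ef h1 adapted U h1_g] by blast
  qed
qed

subsection \<open>Flags\<close>

definition subspace_flag :: "'v set set \<Rightarrow> bool" where
  "subspace_flag F \<longleftrightarrow>
     (\<forall>X\<in>F. subspace X \<and> dim (Rad s X) \<le> 1) \<and> (\<forall>X\<in>F. \<forall>Y\<in>F. incident s X Y)"

lemma subspace_flag_mono: "subspace_flag F \<Longrightarrow> G \<subseteq> F \<Longrightarrow> subspace_flag G"
  unfolding subspace_flag_def by blast

lemma incident_dim_less:
  assumes "incident s X Y" "dim X < dim Y"
  shows "X \<subseteq> Y" "X \<inter> Rad s Y = {0}"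
proof -
  have "X \<noteq> Y" "\<not> Y \<subseteq> X"
    using assms(2) dim_subset[of Y X] by auto
  then show "X \<subseteq> Y" "X \<inter> Rad s Y = {0}"
    using assms(1) unfolding incident_def by blast+
qed

lemma subspace_flag_subset_if_dim_le:
  assumes F: "subspace_flag F" "X \<in> F" "Y \<in> F" and le: "dim X \<le> dim Y"
  shows "X \<subseteq> Y"
proof (cases "dim X = dim Y")
  case True
  have "subspace X" "subspace Y" "incident s X Y"
    using F unfolding subspace_flag_def by auto
  then have "X = Y \<or> X \<subseteq> Y \<or> Y \<subseteq> X"
    unfolding incident_def by blast
  then show ?thesis
    using subspace_dim_equal[OF \<open>subspace Y\<close> \<open>subspace X\<close>] True by auto
next
  case False
  then show ?thesis
    using F le incident_dim_less(1) unfolding subspace_flag_def by simp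
qed

lemma subspace_flag_eq_if_dim_eq:
  "subspace_flag F \<Longrightarrow> X \<in> F \<Longrightarrow> Y \<in> F \<Longrightarrow> dim X = dim Y \<Longrightarrow> X = Y"
  using subspace_flag_subset_if_dim_le[of F X Y] subspace_flag_subset_if_dim_le[of F Y X] by simp

lemma finite_subspace_flag:
  assumes "subspace_flag F"
  shows "finite F"
proof -
  have "inj_on dim F"
    using subspace_flag_eq_if_dim_eq[OF assms] by (rule inj_onI)
  moreover have "finite (dim ` F)"
    using dim_subset_UNIV by (intro finite_subset[OF _ finite_atMost[of dimension]]) auto
  ultimately show ?thesis
    by (rule finite_imageD[rotated])
qed

lemma subspace_flag_top_exists:
  assumes F: "subspace_flag F" "F \<noteq> {}"
  obtains M where "M \<in> F" "\<forall>X\<in>F - {M}. dim X < dim M"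
proof -
  have fin: "finite (dim ` F)" using finite_subspace_flag[OF F(1)] by simp
  obtain M where M: "M \<in> F" "dim M = Max (dim ` F)"
    using Max_in[OF fin] F(2) by (metis empty_is_image imageE)
  have "dim X < dim M" if "X \<in> F - {M}" for X
    using Max_ge[OF fin, of "dim X"] subspace_flag_eq_if_dim_eq[OF F(1), of X M] that M
    by fastforce
  then show ?thesis using M(1) that by blast
qed

lemma Union_subspace_flag_top:
  assumes F: "subspace_flag F" and M: "M \<in> F" "\<forall>X\<in>F - {M}. dim X < dim M"
  shows "\<Union>F = M"
proof -
  have "X \<subseteq> M" if "X \<in> F" for X
  proof -
    have "dim X \<le> dim M"
      using M(2) that by (metis DiffI less_imp_le order_refl singletonD)
    then show ?thesis
      using subspace_flag_subset_if_dim_le[OF F that M(1)] by blast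
  qed
  then show ?thesis using M(1) by blast
qed

lemma span_Union_subspace_flag:
  assumes F: "subspace_flag F" "F \<noteq> {}"
  shows "span (\<Union>F) \<in> F"
proof -
  obtain M where M: "M \<in> F" "\<forall>X\<in>F - {M}. dim X < dim M"
    using subspace_flag_top_exists[OF F] .
  have "subspace M"
    using F(1) M(1) unfolding subspace_flag_def by blast
  then have "span M = M" by (simp add: span_eq_iff)
  then show ?thesis
    unfolding Union_subspace_flag_top[OF F(1) M] using M(1) by (rule ssubst)
qed

lemma span_below_top:
  assumes F: "subspace_flag F" and M: "M \<in> F" "\<forall>X\<in>F - {M}. dim X < dim M"
  shows "span (\<Union>(F - {M})) \<subseteq> M" "span (\<Union>(F - {M})) \<inter> Rad s M = {0}"
proof -
  have "subspace M" using F M(1) unfolding subspace_flag_def by blast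
  have "subspace_flag (F - {M})"
    using subspace_flag_mono[OF F] by blast
  then consider "F - {M} = {}" | "span (\<Union>(F - {M})) \<in> F - {M}"
    using span_Union_subspace_flag by blast
  then have "span (\<Union>(F - {M})) \<subseteq> M \<and> span (\<Union>(F - {M})) \<inter> Rad s M = {0}"
  proof cases
    case 1
    then have "span (\<Union>(F - {M})) = {0}" by (simp only: Union_empty span_empty)
    then show ?thesis
      using subspace_0[OF \<open>subspace M\<close>] subspace_0[OF subspace_Rad[OF \<open>subspace M\<close>]] by auto
  next
    case 2
    then have "incident s (span (\<Union>(F - {M}))) M" "dim (span (\<Union>(F - {M}))) < dim M"
      using F M unfolding subspace_flag_def by blast+
    then show ?thesis using incident_dim_less by blast
  qed
  then show "span (\<Union>(F - {M})) \<subseteq> M" "span (\<Union>(F - {M})) \<inter> Rad s M = {0}" by blast+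
qed

lemma witt_data_flag_top:
  assumes F: "subspace_flag F" "M \<in> F" "\<forall>X\<in>F - {M}. dim X < dim M"
    and F': "subspace_flag F'" "M' \<in> F'" "\<forall>X\<in>F' - {M'}. dim X < dim M'"
    and dim_M: "dim M = dim M'"
    and h0: "lin h0" "inj_on h0 (span (\<Union>(F - {M})))" "isometric_on h0 (span (\<Union>(F - {M})))"
      "\<forall>X\<in>F - {M}. h0 ` X \<in> F' - {M'}"
  shows "witt_data M M' (span (\<Union>(F - {M}))) h0"
proof -
  define U where "U = span (\<Union>(F - {M}))"
  have M: "subspace M" "dim (Rad s M) \<le> 1" and M': "subspace M'" "dim (Rad s M') \<le> 1"
    using F(1,2) F'(1,2) unfolding subspace_flag_def by blast+
  note below = span_below_top[OF F, folded U_def] and below' = span_below_top[OF F']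
  have "h0 ` U \<subseteq> span (\<Union>(F' - {M'}))"
    unfolding U_def pair.linear_span_image[OF h0(1), symmetric]
    using h0(4) by (intro span_mono) blast
  then have "h0 ` U \<subseteq> M'" "h0 ` U \<inter> Rad s M' \<subseteq> {0}"
    using below' by blast+
  moreover have "0 \<in> h0 ` U \<inter> Rad s M'"
    unfolding U_def using span_zero pair.linear_0[OF h0(1)] subspace_0[OF subspace_Rad[OF M'(1)]]
    by force
  ultimately have image: "h0 ` U \<subseteq> M'" "h0 ` U \<inter> Rad s M' = {0}"
    by blast+
  show ?thesis
    unfolding witt_data_def U_def[symmetric]
  proof (intro conjI)
    show "subspace M" "subspace M'" "subspace U" by (fact M(1), fact M'(1)) (simp add: U_def)
    show "dim (Rad s M) = dim (Rad s M')"
      by (rule dim_Rad_eq_if_dim_eq[OF M(1) M'(1) dim_M M(2) M'(2)])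
  qed (use below image dim_M h0(1) h0(2,3)[folded U_def] in simp_all)
qed

lemma subspace_flag_isometry_exists:
  assumes "subspace_flag F" "subspace_flag F'" "dim ` F = dim ` F'"
  shows "\<exists>h. lin h \<and> inj_on h (span (\<Union>F)) \<and> isometric_on h (span (\<Union>F)) \<and>
    (\<forall>X\<in>F. h ` X \<in> F' \<and> dim (h ` X) = dim X)"
  using finite_subspace_flag[OF assms(1)] assms
proof (induction F arbitrary: F' rule: finite_psubset_induct)
  case (psubset F)
  show ?case
  proof (cases "F = {}")
    case True
    then show ?thesis
      using linear_id unfolding isometric_on_def by auto
  next
    case False
    obtain M where M: "M \<in> F" "\<forall>X\<in>F - {M}. dim X < dim M"
      using subspace_flag_top_exists[OF psubset.prems(1) False] .
    obtain M' where M': "M' \<in> F'" "dim M' = dim M"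
      using psubset.prems(3) M(1) by (metis imageE imageI)
    have top': "\<forall>X\<in>F' - {M'}. dim X < dim M'"
    proof
      fix X assume X: "X \<in> F' - {M'}"
      then obtain Y where "Y \<in> F" "dim Y = dim X"
        using psubset.prems(3) by (metis DiffD1 imageE imageI)
      moreover have "dim X \<noteq> dim M'"
        using subspace_flag_eq_if_dim_eq[OF psubset.prems(2)] X M'(1) by blast
      ultimately show "dim X < dim M'"
        using M M'(2) by (metis DiffI le_neq_implies_less less_imp_le order_refl singletonD)
    qed
    have "dim ` (F - {M}) = dim ` F - {dim M}" "dim ` (F' - {M'}) = dim ` F' - {dim M'}"
      using subspace_flag_eq_if_dim_eq[OF psubset.prems(1) _ M(1)]
        subspace_flag_eq_if_dim_eq[OF psubset.prems(2) _ M'(1)] M(1) M'(1) by auto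
    then have dims: "dim ` (F - {M}) = dim ` (F' - {M'})"
      using psubset.prems(3) M'(2) by simp
    have "F - {M} \<subset> F" using M(1) by blast
    from psubset.IH[OF this subspace_flag_mono[OF psubset.prems(1) Diff_subset]
        subspace_flag_mono[OF psubset.prems(2) Diff_subset] dims]
    obtain h0 where h0: "lin h0" "inj_on h0 (span (\<Union>(F - {M})))"
      "isometric_on h0 (span (\<Union>(F - {M})))" "\<forall>X\<in>F - {M}. h0 ` X \<in> F' - {M'} \<and> dim (h0 ` X) = dim X"
      by blast
    have "\<forall>X\<in>F - {M}. h0 ` X \<in> F' - {M'}" using h0(4) by blast
    then have "witt_data M M' (span (\<Union>(F - {M}))) h0"
      by (rule witt_data_flag_top[OF psubset.prems(1) M psubset.prems(2) M'(1) top' M'(2)[symmetric] h0(1-3)])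
    then obtain h where h: "isometry_between h M M'" "\<forall>x\<in>span (\<Union>(F - {M})). h x = h0 x"
      using witt_extension by blast
    have "subspace M"
      using psubset.prems(1) M(1) unfolding subspace_flag_def by blast
    then have span_F: "span (\<Union>F) = M"
      unfolding Union_subspace_flag_top[OF psubset.prems(1) M] by (simp add: span_eq_iff)
    have "h ` X \<in> F' \<and> dim (h ` X) = dim X" if X: "X \<in> F" for X
    proof (cases "X = M")
      case True
      then show ?thesis using h(1) M'(1,2) unfolding isometry_between_def by simp
    next
      case False
      then have "X \<subseteq> \<Union>(F - {M})" using X by blast
      then have "X \<subseteq> span (\<Union>(F - {M}))" using span_superset by (rule order_trans)
      then have "h ` X = h0 ` X" using h(2) by (simp add: subset_iff)
      then show ?thesis using h0(4) X False by simp
    qed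
    moreover have "lin h" "inj_on h M" "isometric_on h M"
      using h(1) unfolding isometry_between_def by blast+
    ultimately show ?thesis unfolding span_F by blast
  qed
qed

lemma objectsD:
  assumes "X \<in> objects scale s"
  shows "subspace X" "dim (Rad s X) \<le> 1" "X \<inter> Rad s UNIV = {0}" "dim X < dim (UNIV :: 'v set)"
  using assms unfolding objects_def is_object_def by auto

lemma subspace_flag_insert_UNIV:
  assumes "maximal_rank scale s" "is_flag scale s F"
  shows "subspace_flag (insert UNIV F)"
proof -
  have objects: "F \<subseteq> objects scale s" and incident: "\<forall>X\<in>F. \<forall>Y\<in>F. incident s X Y"
    using assms(2) unfolding is_flag_def by blast+
  have "incident s X UNIV" "incident s UNIV X" if "X \<in> F" for X
    using objectsD(3)[of X] objects that unfolding incident_def by auto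
  then show ?thesis
    unfolding subspace_flag_def using assms(1) objects objectsD(1,2) incident
    by (auto simp: maximal_rank_def incident_def)
qed

lemma Sp_maps_flag:
  assumes rank: "maximal_rank scale s"
    and F: "is_flag scale s F1" "is_flag scale s F2" "flag_type scale F1 = flag_type scale F2"
  shows "\<exists>g\<in>Sp scale s. (\<lambda>U. g ` U) ` F1 = F2"
proof -
  define G1 G2 where "G1 = insert UNIV F1" and "G2 = insert UNIV F2"
  have G: "subspace_flag G1" "subspace_flag G2"
    unfolding G1_def G2_def using subspace_flag_insert_UNIV[OF rank] F(1,2) by blast+
  have dims: "dim ` F1 = dim ` F2"
    using F(3) unfolding flag_type_def obj_type_def .
  then obtain h where h: "lin h" "inj_on h (span (\<Union>G1))" "isometric_on h (span (\<Union>G1))"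
    "\<forall>X\<in>G1. h ` X \<in> G2 \<and> dim (h ` X) = dim X"
    using subspace_flag_isometry_exists[OF G] unfolding G1_def G2_def by auto
  have span_G1: "span (\<Union>G1) = UNIV" unfolding G1_def by auto
  have proper: "dim X < dim (UNIV :: 'v set)" if "X \<in> F1 \<union> F2" for X
    using that F(1,2) objectsD(4) unfolding is_flag_def by blast
  have "h ` UNIV = UNIV"
    using subspace_flag_eq_if_dim_eq[OF G(2)] h(4) unfolding G1_def G2_def by auto
  then have "h \<in> Sp scale s"
    using h(1-3) unfolding Sp_def span_G1 isometric_on_def by (auto simp: bij_def)
  moreover have "(\<lambda>U. h ` U) ` F1 = F2"
  proof
    show "(\<lambda>U. h ` U) ` F1 \<subseteq> F2"
      using h(4) proper unfolding G1_def G2_def by fastforce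
    show "F2 \<subseteq> (\<lambda>U. h ` U) ` F1"
    proof
      fix Y assume Y: "Y \<in> F2"
      then obtain X where X: "X \<in> F1" "dim X = dim Y"
        using dims by (metis imageE imageI)
      then have "h ` X = Y"
        using subspace_flag_eq_if_dim_eq[OF G(2), of "h ` X" Y] h(4) Y unfolding G1_def G2_def by auto
      then show "Y \<in> (\<lambda>U. h ` U) ` F1" using X(1) by blast
    qed
  qed
  ultimately show ?thesis by blast
qed

lemma flag_transitive_Sp:
  assumes "maximal_rank scale s"
  shows "flag_transitive scale s (Sp scale s)"
  unfolding flag_transitive_def using Sp_maps_flag[OF assms] by blast

end

theorem lemma5p1:
  fixes scale :: "'a::field \<Rightarrow> 'v::ab_group_add \<Rightarrow> 'v"
    and B :: "'v set" and s :: "'v \<Rightarrow> 'v \<Rightarrow> 'a" and n :: nat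
  assumes "finite_dimensional_vector_space scale B"
    and "vector_space.dim scale (UNIV::'v set) = n"
    and "bilinear_form scale s"
    and "alternating s"
    and "maximal_rank scale s"
  shows "flag_transitive scale s (Sp scale s)"
proof -
  interpret alternating_form scale B s
    using assms(1,3,4) by (intro alternating_form.intro alternating_form_axioms.intro)
  show ?thesis
    using flag_transitive_Sp[OF assms(5)] .
qed

end
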